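(* In the setting described in the context, the set $\{\ell_{xy}\mid x,y\in V\}$ spans the whole space $V^*$. Moreover, if $a\in V$ is such that either $\ell_{ax}=0$ for all $x\in V$ or $\ell_{xa}=0$ for all $x\in V$, then $a=0$.
   Context: Let $V$ be a $3$-dimensional vector space over a field $k$ and $\zeta\in GL(V)$. Write $xy$ for $x\otimes y$ in $T(V)$. Put $x\barwedge y=\zeta(x)y-\zeta(y)x$ and $x\barwedge y\barwedge z=\zeta^2(x)\zeta(y)z+\zeta^2(y)\zeta(z)x+\zeta^2(z)\zeta(x)y-\zeta^2(x)\zeta(z)y-\zeta^2(y)\zeta(x)z-\zeta^2(z)\zeta(y)x$. Let $I_2=\mathrm{span}\{x\barwedge y\}\subset V^{\otimes 2}$ and $\Upsilon^{(3)}=(I_2\otimes V)\cap(V\otimes I_2)=\mathrm{span}\{x\barwedge y\barwedge z\}$ (one-dimensional). Via the isomorphisms $\bigwedge^2V\cong I_2$, $x\wedge y\mapsto x\barwedge y$, and $\bigwedge^3V\cong\Upsilon^{(3)}$, $x\wedge y\wedge z\mapsto x\barwedge y\barwedge z$, there is a bilinear product $x\barwedge w\in\Upsilon^{(3)}$ for $x\in V$, $w\in I_2$, with $x\barwedge(y\barwedge z)=x\barwedge y\barwedge z$. Let $R$ be a Hecke symmetry on $V$ with parameter $q\neq0$ (braid equation and $(R-q\,\mathrm{Id})(R+\mathrm{Id})=0$) such that $\mathrm{Im}(R-q\,\mathrm{Id})=I_2$ (i.e. $\mathbb{S}(V,R)=T(V)/(I_2)$). Put $Y=q\,\mathrm{Id}-R$.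 Fix a nonzero alternating trilinear form $\omega$ on $V$, let $\tilde\omega:\Upsilon^{(3)}\to k$ be the linear map with $\tilde\omega(x\barwedge y\barwedge z)=\omega(x,y,z)$, and define $\ell_{xy}\in V^*$ by $\ell_{xy}(z)=\tilde\omega\big(x\barwedge Y(\zeta(y)z)\big)$. *)

theory Defs
  imports Main "HOL-Library.Numeral_Type" "HOL-Library.Function_Algebras"
begin

text \<open>Coordinate model: V = k^3 is the space of functions 3 => k (3 the three-element type);
  V (x) V is the space of functions 3 x 3 => k, V (x) V (x) V that of functions 3 x 3 x 3 => k.\<close>

type_synonym 'k vec3 = "3 \<Rightarrow> 'k"
type_synonym 'k ten2 = "3 \<times> 3 \<Rightarrow> 'k"
type_synonym 'k ten3 = "3 \<times> 3 \<times> 3 \<Rightarrow> 'k"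

definition scal :: "'k::times \<Rightarrow> ('i \<Rightarrow> 'k) \<Rightarrow> ('i \<Rightarrow> 'k)" where
  "scal c f = (\<lambda>i. c * f i)"

definition klin :: "(('i \<Rightarrow> 'k::field) \<Rightarrow> ('j \<Rightarrow> 'k)) \<Rightarrow> bool" where
  "klin f \<longleftrightarrow> (\<forall>x y. f (x + y) = f x + f y) \<and> (\<forall>c x. f (scal c x) = scal c (f x))"

definition lin_form :: "(('i \<Rightarrow> 'k::field) \<Rightarrow> 'k) \<Rightarrow> bool" where
  "lin_form f \<longleftrightarrow> (\<forall>x y. f (x + y) = f x + f y) \<and> (\<forall>c x. f (scal c x) = c * f x)"

definition tens2 :: "'k::field vec3 \<Rightarrow> 'k vec3 \<Rightarrow> 'k ten2" where
  "tens2 x y = (\<lambda>(i, j). x i * y j)"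

definition tens3 :: "'k::field vec3 \<Rightarrow> 'k vec3 \<Rightarrow> 'k vec3 \<Rightarrow> 'k ten3" where
  "tens3 x y z = (\<lambda>(i, j, m). x i * y j * z m)"

definition bw2 :: "('k::field vec3 \<Rightarrow> 'k vec3) \<Rightarrow> 'k vec3 \<Rightarrow> 'k vec3 \<Rightarrow> 'k ten2" where
  "bw2 \<zeta> x y = tens2 (\<zeta> x) y - tens2 (\<zeta> y) x"

definition bw3 :: "('k::field vec3 \<Rightarrow> 'k vec3) \<Rightarrow> 'k vec3 \<Rightarrow> 'k vec3 \<Rightarrow> 'k vec3 \<Rightarrow> 'k ten3" where
  "bw3 \<zeta> x y z =
     tens3 (\<zeta> (\<zeta> x)) (\<zeta> y) z + tens3 (\<zeta> (\<zeta> y)) (\<zeta> z) x + tens3 (\<zeta> (\<zeta> z)) (\<zeta> x) y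
   - tens3 (\<zeta> (\<zeta> x)) (\<zeta> z) y - tens3 (\<zeta> (\<zeta> y)) (\<zeta> x) z - tens3 (\<zeta> (\<zeta> z)) (\<zeta> y) x"

definition I2 :: "('k::field vec3 \<Rightarrow> 'k vec3) \<Rightarrow> 'k ten2 set" where
  "I2 \<zeta> = {w. \<exists>S c. finite S \<and> w = (\<Sum>p\<in>S. scal (c p) (bw2 \<zeta> (fst p) (snd p)))}"

text \<open>The bilinear product x barwedge w for w in I_2, determined by linearity in w and
  x barwedge (y barwedge z) = x barwedge y barwedge z (well defined via the isomorphisms
  Lambda^2 V = I_2, Lambda^3 V = Upsilon^(3)).\<close>
definition wprod :: "('k::field vec3 \<Rightarrow> 'k vec3) \<Rightarrow> 'k vec3 \<Rightarrow> 'k ten2 \<Rightarrow> 'k ten3" where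
  "wprod \<zeta> x w = (THE u. \<exists>S c. finite S
       \<and> w = (\<Sum>p\<in>S. scal (c p) (bw2 \<zeta> (fst p) (snd p)))
       \<and> u = (\<Sum>p\<in>S. scal (c p) (bw3 \<zeta> x (fst p) (snd p))))"

definition omega_tilde :: "('k::field vec3 \<Rightarrow> 'k vec3) \<Rightarrow> ('k vec3 \<Rightarrow> 'k vec3 \<Rightarrow> 'k vec3 \<Rightarrow> 'k)
     \<Rightarrow> 'k ten3 \<Rightarrow> 'k" where
  "omega_tilde \<zeta> \<omega> u = (THE t. \<exists>S c. finite S
       \<and> u = (\<Sum>p\<in>S. scal (c p) (bw3 \<zeta> (fst p) (fst (snd p)) (snd (snd p))))
       \<and> t = (\<Sum>p\<in>S. c p * \<omega> (fst p) (fst (snd p)) (snd (snd p))))"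

text \<open>R (x) Id and Id (x) R on V (x) V (x) V.\<close>
definition R12 :: "('k ten2 \<Rightarrow> 'k ten2) \<Rightarrow> 'k ten3 \<Rightarrow> 'k ten3" where
  "R12 R U = (\<lambda>(i, j, m). R (\<lambda>(k, l). U (k, l, m)) (i, j))"

definition R23 :: "('k ten2 \<Rightarrow> 'k ten2) \<Rightarrow> 'k ten3 \<Rightarrow> 'k ten3" where
  "R23 R U = (\<lambda>(i, j, m). R (\<lambda>(k, l). U (i, k, l)) (j, m))"

definition hecke :: "'k::field \<Rightarrow> ('k ten2 \<Rightarrow> 'k ten2) \<Rightarrow> bool" where
  "hecke q R \<longleftrightarrow> klin R
     \<and> (\<forall>U. R12 R (R23 R (R12 R U)) = R23 R (R12 R (R23 R U)))
     \<and> (\<forall>T. R (R T + T) - scal q (R T + T) = 0)"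

definition Ymap :: "'k::field \<Rightarrow> ('k ten2 \<Rightarrow> 'k ten2) \<Rightarrow> 'k ten2 \<Rightarrow> 'k ten2" where
  "Ymap q R T = scal q T - R T"

definition alt_trilinear :: "('k::field vec3 \<Rightarrow> 'k vec3 \<Rightarrow> 'k vec3 \<Rightarrow> 'k) \<Rightarrow> bool" where
  "alt_trilinear \<omega> \<longleftrightarrow>
     (\<forall>y z. lin_form (\<lambda>x. \<omega> x y z)) \<and> (\<forall>x z. lin_form (\<lambda>y. \<omega> x y z))
     \<and> (\<forall>x y. lin_form (\<lambda>z. \<omega> x y z))
     \<and> (\<forall>x z. \<omega> x x z = 0) \<and> (\<forall>x y. \<omega> x y x = 0) \<and> (\<forall>x y. \<omega> x y y = 0)"

definition ell :: "('k::field vec3 \<Rightarrow> 'k vec3) \<Rightarrow> 'k \<Rightarrow> ('k ten2 \<Rightarrow> 'k ten2)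
     \<Rightarrow> ('k vec3 \<Rightarrow> 'k vec3 \<Rightarrow> 'k vec3 \<Rightarrow> 'k) \<Rightarrow> 'k vec3 \<Rightarrow> 'k vec3 \<Rightarrow> 'k vec3 \<Rightarrow> 'k" where
  "ell \<zeta> q R \<omega> x y = (\<lambda>z. omega_tilde \<zeta> \<omega> (wprod \<zeta> x (Ymap q R (tens2 (\<zeta> y) z))))"

end

theory Submission
  imports Defs "HOL.Vector_Spaces"
begin

(* Write <x, w> for the coefficient of x \<barwedge> w in the line \<Upsilon>^(3), normalised by
   <x, y \<barwedge> z> = det(x, y, z); then \<omega>~ is a nonzero multiple of this coordinate and
   \<ell>_xy(z) = c <x, Y(\<zeta>(y) z)> with c \<noteq> 0.  After untwisting by \<zeta>, I_2 consists of
   antisymmetric matrices and <x, w> is the cross-product pairing, so it is nondegenerate on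
   both sides; moreover Y maps onto I_2 with kernel the q-eigenspace of R.  Hence a common zero z
   of all \<ell>_xy puts V \<otimes> z into the q-eigenspace, \<ell>_ax = 0 for all x forces
   <a, I_2> = 0, and \<ell>_xa = 0 for all x puts \<zeta>(a) \<otimes> V into the q-eigenspace.  For a
   Hecke symmetry R \<noteq> q Id a nonzero b with b \<otimes> V (or V \<otimes> b) in the q-eigenspace is
   impossible: the braid relation would make R act as q on its own image, and the quadratic
   relation then gives R = q Id.  Spanning follows because finitely many linear forms without a
   common nonzero zero span the dual space. *)

section \<open>Linear maps on coordinate spaces\<close>

lemma scal_apply: "scal c f i = c * f i"
  by (simp add: scal_def)

lemma scal_cancel: "scal c x = scal c y \<Longrightarrow> (c :: 'k::field) \<noteq> 0 \<Longrightarrow> x = y"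
  by (simp add: fun_eq_iff scal_apply)

lemma klin_add: "klin f \<Longrightarrow> f (x + y) = f x + f y"
  by (simp add: klin_def)

lemma klin_scal: "klin f \<Longrightarrow> f (scal c x) = scal c (f x)"
  by (simp add: klin_def)

lemma klin_diff: "klin f \<Longrightarrow> f (x - y) = f x - f y"
  using klin_add[of f "x - y" y] by (simp add: eq_diff_eq)

lemma klin_zero: "klin f \<Longrightarrow> f 0 = 0"
  using klin_diff[of f 0 0] by simp

lemma klin_uminus: "klin f \<Longrightarrow> f (- x) = - f x"
  using klin_diff[of f 0 x] klin_zero[of f] by simp

lemma klin_sum: "klin f \<Longrightarrow> f (\<Sum>p\<in>S. scal (c p) (g p)) = (\<Sum>p\<in>S. scal (c p) (f (g p)))"
  by (induct S rule: infinite_finite_induct) (simp_all add: klin_zero klin_add klin_scal fun_eq_iff)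

lemma klin_comp: "klin f \<Longrightarrow> klin g \<Longrightarrow> klin (\<lambda>x. f (g x))"
  by (simp add: klin_def)

lemma klin_inv:
  assumes "klin f" and "bij f"
  shows "klin (inv f)"
proof -
  have "inj f" and f_inv: "\<And>v. f (inv f v) = v"
    using \<open>bij f\<close> by (simp_all add: bij_is_inj bij_is_surj surj_f_inv_f)
  show ?thesis
    unfolding klin_def
    by (intro conjI allI; rule injD[OF \<open>inj f\<close>])
      (simp_all add: f_inv klin_add[OF \<open>klin f\<close>] klin_scal[OF \<open>klin f\<close>])
qed

lemma lin_form_add: "lin_form f \<Longrightarrow> f (x + y) = f x + f y"
  by (simp add: lin_form_def)

lemma lin_form_scal: "lin_form f \<Longrightarrow> f (scal c x) = c * f x"
  by (simp add: lin_form_def)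

lemma lin_form_zero: "lin_form f \<Longrightarrow> f 0 = 0"
  using lin_form_add[of f 0 0] by (metis add_0 add_right_cancel)

lemma lin_form_sum:
  "lin_form f \<Longrightarrow> f (\<Sum>p\<in>S. scal (c p) (g p)) = (\<Sum>p\<in>S. c p * f (g p))"
  by (induct S rule: infinite_finite_induct) (simp_all add: lin_form_zero lin_form_add lin_form_scal)

lemma lin_form_comp: "klin g \<Longrightarrow> lin_form f \<Longrightarrow> lin_form (\<lambda>x. f (g x))"
  by (simp add: lin_form_def klin_def)

lemma lin_form_apply: "klin f \<Longrightarrow> lin_form (\<lambda>x. f x i)"
  by (simp add: lin_form_def klin_def scal_apply)

lemma sum_fun_apply: "(\<Sum>p\<in>S. f p) x = (\<Sum>p\<in>S. f p x)"
  by (induct S rule: infinite_finite_induct) simp_all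

definition delta :: "'i \<Rightarrow> 'i \<Rightarrow> 'k::zero_neq_one" where
  "delta t = (\<lambda>s. if s = t then 1 else 0)"

lemma expand_finite_support:
  fixes y :: "'i \<Rightarrow> 'k::field"
  assumes "finite S" and "\<And>t. t \<notin> S \<Longrightarrow> y t = 0"
  shows "y = (\<Sum>t\<in>S. scal (y t) (delta t))"
proof
  fix s
  have "(\<Sum>t\<in>S. scal (y t) (delta t)) s = (\<Sum>t\<in>S. if t = s then y s else 0)"
    unfolding sum_fun_apply by (rule sum.cong) (auto simp: delta_def scal_apply)
  also have "\<dots> = y s"
    using assms by (simp add: sum.delta)
  finally show "y s = (\<Sum>t\<in>S. scal (y t) (delta t)) s" by simp
qed

lemma lin_form_eq_sum:
  fixes x :: "'i::finite \<Rightarrow> 'k::field"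
  assumes "lin_form f"
  shows "f x = (\<Sum>t\<in>UNIV. x t * f (delta t))"
  using arg_cong[OF expand_finite_support[of UNIV x, simplified], of f]
  by (simp add: lin_form_sum[OF assms])

lemma exhaust_3: "(i :: 3) = 0 \<or> i = 1 \<or> i = 2"
proof (induct i)
  case (of_int z)
  then have "z = 0 \<or> z = 1 \<or> z = 2" by fastforce
  then show ?case by auto
qed

lemma UNIV_3: "(UNIV :: 3 set) = {0, 1, 2}"
  using exhaust_3 by auto

lemma lin_form_expand_3:
  fixes f :: "'k::field vec3 \<Rightarrow> 'k"
  assumes "lin_form f"
  shows "f x = x 0 * f (delta 0) + x 1 * f (delta 1) + x 2 * f (delta 2)"
proof -
  have "(\<Sum>t\<in>UNIV. x t * f (delta t)) = x 0 * f (delta 0) + x 1 * f (delta 1) + x 2 * f (delta 2)"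
    unfolding UNIV_3 by (simp add: add.assoc)
  then show ?thesis
    using lin_form_eq_sum[OF assms, of x] by simp
qed

lemma vector_space_scal: "vector_space (scal :: 'k::field \<Rightarrow> ('i \<Rightarrow> 'k) \<Rightarrow> 'i \<Rightarrow> 'k)"
  by unfold_locales (simp_all add: scal_def fun_eq_iff algebra_simps)

lemma klin_left_inverse:
  fixes h :: "('i \<Rightarrow> 'k::field) \<Rightarrow> 'j \<Rightarrow> 'k"
  assumes "klin h" and "inj h"
  obtains g where "klin g" and "\<And>x. g (h x) = x"
proof -
  interpret vector_space_pair "scal :: 'k \<Rightarrow> ('i \<Rightarrow> 'k) \<Rightarrow> _" "scal :: 'k \<Rightarrow> ('j \<Rightarrow> 'k) \<Rightarrow> _"
    by (simp add: vector_space_pair_def vector_space_scal)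
  have linear_iff: "Vector_Spaces.linear scal scal f \<longleftrightarrow> klin f" for f :: "('a \<Rightarrow> 'k) \<Rightarrow> 'b \<Rightarrow> 'k"
    by (simp add: Vector_Spaces.linear_iff vector_space_scal klin_def)
  obtain g where "Vector_Spaces.linear scal scal g" and "g \<circ> h = id"
    using linear_injective_left_inverse \<open>klin h\<close> \<open>inj h\<close> linear_iff by blast
  then show ?thesis
    using that linear_iff by (metis comp_apply id_apply)
qed

lemma lin_form_in_span:
  fixes f :: "'p \<Rightarrow> ('i \<Rightarrow> 'k::field) \<Rightarrow> 'k"
  assumes "finite S"
    and f: "\<And>p. p \<in> S \<Longrightarrow> lin_form (f p)"
    and separating: "\<And>z. (\<And>p. p \<in> S \<Longrightarrow> f p z = 0) \<Longrightarrow> z = 0"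
    and "lin_form \<phi>"
  shows "\<exists>c. \<phi> = (\<lambda>z. \<Sum>p\<in>S. c p * f p z)"
proof -
  define h where "h z = (\<lambda>p. if p \<in> S then f p z else 0)" for z
  have "klin h"
    using f by (auto simp: klin_def h_def fun_eq_iff scal_apply lin_form_add lin_form_scal)
  moreover have "inj h"
  proof (rule injI)
    fix z z' assume "h z = h z'"
    then have "h (z - z') = 0"
      using klin_diff[OF \<open>klin h\<close>] by simp
    then have "z - z' = 0"
      by (intro separating) (auto simp: h_def fun_eq_iff split: if_splits)
    then show "z = z'" by simp
  qed
  ultimately obtain g where "klin g" and g_h: "\<And>z. g (h z) = z"
    using klin_left_inverse by blast
  have "\<phi> z = (\<Sum>p\<in>S. \<phi> (g (delta p)) * f p z)" for z
  proof -
    have "h z = (\<Sum>p\<in>S. scal (h z p) (delta p))"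
      using \<open>finite S\<close> by (rule expand_finite_support) (simp add: h_def)
    then have "\<phi> z = \<phi> (g (\<Sum>p\<in>S. scal (h z p) (delta p)))"
      by (simp add: g_h)
    also have "\<dots> = (\<Sum>p\<in>S. h z p * \<phi> (g (delta p)))"
      using lin_form_sum[OF lin_form_comp[OF \<open>klin g\<close> \<open>lin_form \<phi>\<close>]] .
    finally show ?thesis
      by (simp add: h_def mult.commute)
  qed
  then show ?thesis by fast
qed

section \<open>Tensors\<close>

definition outer :: "('a \<Rightarrow> 'k::times) \<Rightarrow> ('b \<Rightarrow> 'k) \<Rightarrow> 'a \<times> 'b \<Rightarrow> 'k" where
  "outer a b = (\<lambda>(i, j). a i * b j)"

definition outer_last :: "('a \<times> 'b \<Rightarrow> 'k::times) \<Rightarrow> ('c \<Rightarrow> 'k) \<Rightarrow> 'a \<times> 'b \<times> 'c \<Rightarrow> 'k" where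
  "outer_last X c = (\<lambda>(i, j, m). X (i, j) * c m)"

lemma tens2_eq_outer: "tens2 = outer"
  by (simp add: fun_eq_iff tens2_def outer_def)

lemma tens3_eq_outer: "tens3 x y z = outer x (outer y z)"
  by (simp add: fun_eq_iff tens3_def outer_def mult.assoc)

lemma delta_pair: "delta p = (outer (delta (fst p)) (delta (snd p)) :: _ \<Rightarrow> 'k::field)"
  by (cases p) (auto simp: fun_eq_iff outer_def delta_def)

lemma outer_cancel: "outer b X = outer b Y \<Longrightarrow> b \<noteq> 0 \<Longrightarrow> X = (Y :: _ \<Rightarrow> 'k::field)"
  by (auto simp: outer_def fun_eq_iff)

lemma outer_last_cancel: "outer_last X c = outer_last Y c \<Longrightarrow> c \<noteq> 0 \<Longrightarrow> X = (Y :: _ \<Rightarrow> 'k::field)"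
  by (auto simp: outer_last_def fun_eq_iff)

lemma klin_tens2_left: "klin (\<lambda>v. tens2 v z)"
  by (simp add: klin_def tens2_def fun_eq_iff scal_apply algebra_simps)

lemma klin_tens2_right: "klin (tens2 v)"
  by (simp add: klin_def tens2_def fun_eq_iff scal_apply algebra_simps)

definition tensor_id :: "(('a \<Rightarrow> 'k) \<Rightarrow> 'b \<Rightarrow> 'k) \<Rightarrow> ('a \<times> 'c \<Rightarrow> 'k) \<Rightarrow> 'b \<times> 'c \<Rightarrow> 'k" where
  "tensor_id f u = (\<lambda>(i, j). f (\<lambda>k. u (k, j)) i)"

definition id_tensor :: "(('a \<Rightarrow> 'k) \<Rightarrow> 'b \<Rightarrow> 'k) \<Rightarrow> ('c \<times> 'a \<Rightarrow> 'k) \<Rightarrow> 'c \<times> 'b \<Rightarrow> 'k" where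
  "id_tensor f u = (\<lambda>(i, j). f (\<lambda>k. u (i, k)) j)"

lemma klin_tensor_id:
  fixes f :: "('a \<Rightarrow> 'k::field) \<Rightarrow> 'b \<Rightarrow> 'k"
  assumes "klin f"
  shows "klin (tensor_id f)"
proof -
  have "f (\<lambda>k. x (k, j) + y (k, j)) = f (\<lambda>k. x (k, j)) + f (\<lambda>k. y (k, j))"
    and "f (\<lambda>k. c * x (k, j)) = scal c (f (\<lambda>k. x (k, j)))" for x y :: "'a \<times> 'c \<Rightarrow> 'k" and c j
    using klin_add[OF assms, of "\<lambda>k. x (k, j)" "\<lambda>k. y (k, j)"]
      klin_scal[OF assms, of c "\<lambda>k. x (k, j)"] by (simp_all add: plus_fun_def scal_def)
  then show ?thesis
    by (simp add: klin_def tensor_id_def fun_eq_iff scal_apply)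
qed

lemma klin_id_tensor:
  fixes f :: "('a \<Rightarrow> 'k::field) \<Rightarrow> 'b \<Rightarrow> 'k"
  assumes "klin f"
  shows "klin (id_tensor f)"
proof -
  have "f (\<lambda>k. x (i, k) + y (i, k)) = f (\<lambda>k. x (i, k)) + f (\<lambda>k. y (i, k))"
    and "f (\<lambda>k. c * x (i, k)) = scal c (f (\<lambda>k. x (i, k)))" for x y :: "'c \<times> 'a \<Rightarrow> 'k" and c i
    using klin_add[OF assms, of "\<lambda>k. x (i, k)" "\<lambda>k. y (i, k)"]
      klin_scal[OF assms, of c "\<lambda>k. x (i, k)"] by (simp_all add: plus_fun_def scal_def)
  then show ?thesis
    by (simp add: klin_def id_tensor_def fun_eq_iff scal_apply)
qed

lemma tensor_id_outer:
  assumes "klin f"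
  shows "tensor_id f (outer a X) = outer (f a) X"
proof -
  have "tensor_id f (outer a X) (i, j) = f (scal (X j) a) i" for i j
    by (simp add: tensor_id_def outer_def scal_def mult.commute)
  then show ?thesis
    by (simp add: fun_eq_iff split_paired_All klin_scal[OF assms] scal_apply outer_def mult.commute)
qed

lemma id_tensor_outer:
  assumes "klin f"
  shows "id_tensor f (outer a X) = outer a (f X)"
proof -
  have "id_tensor f (outer a X) (i, j) = f (scal (a i) X) j" for i j
    by (simp add: id_tensor_def outer_def scal_def)
  then show ?thesis
    by (simp add: fun_eq_iff split_paired_All klin_scal[OF assms] scal_apply outer_def)
qed

lemma tensor_id_tensor_id: "tensor_id f (tensor_id g u) = tensor_id (\<lambda>x. f (g x)) u"
  by (simp add: tensor_id_def fun_eq_iff)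

lemma tensor_id_ident: "tensor_id (\<lambda>x. x) u = u"
  by (simp add: tensor_id_def fun_eq_iff)

section \<open>Hecke symmetries\<close>

lemma R12_outer:
  assumes "\<And>v. R (tens2 b v) = scal q (tens2 b v)"
  shows "R12 R (outer b X) = outer b (scal q X)"
proof (intro ext, clarify)
  fix i j m
  have "R12 R (outer b X) (i, j, m) = R (tens2 b (\<lambda>l. X (l, m))) (i, j)"
    by (simp add: R12_def outer_def tens2_def)
  also have "\<dots> = outer b (scal q X) (i, j, m)"
    by (simp only: assms) (simp add: scal_apply outer_def tens2_def mult.left_commute)
  finally show "R12 R (outer b X) (i, j, m) = outer b (scal q X) (i, j, m)" .
qed

lemma R23_eq_id_tensor: "R23 R U = id_tensor R U"
  unfolding R23_def id_tensor_def by (intro ext) (auto simp: case_prod_unfold)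

lemma R12_outer_last:
  assumes "klin R"
  shows "R12 R (outer_last X c) = outer_last (R X) c"
proof (intro ext, clarify)
  fix i j m
  have "R12 R (outer_last X c) (i, j, m) = R (scal (c m) X) (i, j)"
    by (simp add: R12_def outer_last_def scal_def case_prod_unfold mult.commute)
  also have "\<dots> = outer_last (R X) c (i, j, m)"
    by (simp add: klin_scal[OF assms] scal_apply outer_last_def mult.commute)
  finally show "R12 R (outer_last X c) (i, j, m) = outer_last (R X) c (i, j, m)" .
qed

lemma R23_outer_last:
  assumes "\<And>v. R (tens2 v c) = scal q (tens2 v c)"
  shows "R23 R (outer_last X c) = outer_last (scal q X) c"
proof (intro ext, clarify)
  fix i j m
  have "R23 R (outer_last X c) (i, j, m) = R (tens2 (\<lambda>k. X (i, k)) c) (j, m)"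
    by (simp add: R23_def outer_last_def tens2_def)
  also have "\<dots> = outer_last (scal q X) c (i, j, m)"
    by (simp only: assms) (simp add: scal_apply outer_last_def tens2_def mult.assoc)
  finally show "R23 R (outer_last X c) (i, j, m) = outer_last (scal q X) c (i, j, m)" .
qed

lemma hecke_klin: "hecke q R \<Longrightarrow> klin R"
  by (simp add: hecke_def)

lemma hecke_braid: "hecke q R \<Longrightarrow> R12 R (R23 R (R12 R U)) = R23 R (R12 R (R23 R U))"
  by (simp add: hecke_def)

lemma hecke_scal_if_scal_on_range:
  assumes "hecke q R" and range: "\<And>X. R (R X) = scal q (R X)"
  shows "R X = scal q X"
proof -
  have "0 = R (R X + X) - scal q (R X + X)"
    using \<open>hecke q R\<close> by (simp add: hecke_def)
  also have "\<dots> = R X - scal q X"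
    by (simp add: klin_add[OF hecke_klin[OF \<open>hecke q R\<close>]] range fun_eq_iff scal_apply algebra_simps)
  finally show ?thesis by simp
qed

(* The braid relation applied to b \<otimes> X makes R act as q on its own image. *)
lemma hecke_left_eigen_eq_0:
  assumes "hecke q R" and "q \<noteq> 0" and "R X\<^sub>0 \<noteq> scal q X\<^sub>0"
    and eigen: "\<And>v. R (tens2 b v) = scal q (tens2 b v)"
  shows "b = 0"
proof (rule ccontr)
  assume "b \<noteq> 0"
  have klin_R: "klin R" using hecke_klin[OF \<open>hecke q R\<close>] .
  have "R (R X) = scal q (R X)" for X
  proof -
    have "outer b (scal q (R (scal q X))) = outer b (R (scal q (R X)))"
      using hecke_braid[OF \<open>hecke q R\<close>, of "outer b X"]
      by (simp add: R12_outer[OF eigen] R23_eq_id_tensor id_tensor_outer[OF klin_R])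
    then have "scal q (scal q (R X)) = scal q (R (R X))"
      using outer_cancel \<open>b \<noteq> 0\<close> by (simp add: klin_scal[OF klin_R])
    then show ?thesis
      using scal_cancel \<open>q \<noteq> 0\<close> by metis
  qed
  then show False
    using hecke_scal_if_scal_on_range[OF \<open>hecke q R\<close>] \<open>R X\<^sub>0 \<noteq> scal q X\<^sub>0\<close> by blast
qed

lemma hecke_right_eigen_eq_0:
  assumes "hecke q R" and "q \<noteq> 0" and "R X\<^sub>0 \<noteq> scal q X\<^sub>0"
    and eigen: "\<And>v. R (tens2 v c) = scal q (tens2 v c)"
  shows "c = 0"
proof (rule ccontr)
  assume "c \<noteq> 0"
  have klin_R: "klin R" using hecke_klin[OF \<open>hecke q R\<close>] .
  have "R (R X) = scal q (R X)" for X
  proof -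
    have "outer_last (R (scal q (R X))) c = outer_last (scal q (R (scal q X))) c"
      using hecke_braid[OF \<open>hecke q R\<close>, of "outer_last X c"]
      by (simp add: R12_outer_last[OF klin_R] R23_outer_last[OF eigen])
    then have "scal q (R (R X)) = scal q (scal q (R X))"
      using outer_last_cancel \<open>c \<noteq> 0\<close> by (simp add: klin_scal[OF klin_R])
    then show ?thesis
      using scal_cancel \<open>q \<noteq> 0\<close> by metis
  qed
  then show False
    using hecke_scal_if_scal_on_range[OF \<open>hecke q R\<close>] \<open>R X\<^sub>0 \<noteq> scal q X\<^sub>0\<close> by blast
qed

lemma klin_Ymap: "klin R \<Longrightarrow> klin (Ymap q R)"
  unfolding klin_def Ymap_def by (simp add: fun_eq_iff scal_apply algebra_simps)

lemma Ymap_uminus: "klin R \<Longrightarrow> Ymap q R (- T) = R T - scal q T"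
  unfolding Ymap_def by (simp add: klin_uminus fun_eq_iff scal_apply)

lemma Ymap_eq_0_iff: "Ymap q R T = 0 \<longleftrightarrow> R T = scal q T"
  unfolding Ymap_def by auto

section \<open>Alternating trilinear forms\<close>

definition det3 :: "'k::field vec3 \<Rightarrow> 'k vec3 \<Rightarrow> 'k vec3 \<Rightarrow> 'k" where
  "det3 x y z = x 0 * y 1 * z 2 + y 0 * z 1 * x 2 + z 0 * x 1 * y 2
     - x 0 * z 1 * y 2 - y 0 * x 1 * z 2 - z 0 * y 1 * x 2"

lemma det3_delta:
  "det3 (delta 0) y z = y 1 * z 2 - y 2 * z 1"
  "det3 (delta 1) y z = y 2 * z 0 - y 0 * z 2"
  "det3 (delta 2) y z = y 0 * z 1 - y 1 * z 0"
  by (simp_all add: det3_def delta_def algebra_simps)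

lemma eq_0_if_det3_eq_0:
  assumes "\<And>y z. det3 x y z = 0"
  shows "x = 0"
proof -
  have "x 0 = 0" "x 1 = 0" "x 2 = 0"
    using assms[of "delta 1" "delta 2"] assms[of "delta 2" "delta 0"] assms[of "delta 0" "delta 1"]
    by (simp_all add: det3_def delta_def)
  then show ?thesis
    by (metis exhaust_3 zero_fun_apply ext)
qed

lemma alt_trilinear_add:
  assumes "alt_trilinear \<omega>"
  shows "\<omega> (x + x') y z = \<omega> x y z + \<omega> x' y z"
    and "\<omega> x (y + y') z = \<omega> x y z + \<omega> x y' z"
    and "\<omega> x y (z + z') = \<omega> x y z + \<omega> x y z'"
  using assms by (simp_all add: alt_trilinear_def lin_form_def)

lemma alt_trilinear_zero:
  assumes "alt_trilinear \<omega>"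
  shows "\<omega> x x z = 0" and "\<omega> x y x = 0" and "\<omega> x y y = 0"
  using assms by (simp_all add: alt_trilinear_def)

lemma alt_trilinear_swap12:
  assumes "alt_trilinear \<omega>"
  shows "\<omega> y x z = - \<omega> x y z"
proof -
  have "0 = \<omega> (x + y) (x + y) z"
    by (simp add: alt_trilinear_zero[OF assms])
  also have "\<dots> = \<omega> x x z + \<omega> x y z + (\<omega> y x z + \<omega> y y z)"
    by (simp only: alt_trilinear_add[OF assms] ac_simps)
  also have "\<dots> = \<omega> x y z + \<omega> y x z"
    by (simp add: alt_trilinear_zero[OF assms])
  finally show ?thesis
    by (simp add: eq_neg_iff_add_eq_0 add.commute)
qed

lemma alt_trilinear_swap23:
  assumes "alt_trilinear \<omega>"
  shows "\<omega> x z y = - \<omega> x y z"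
proof -
  have "0 = \<omega> x (y + z) (y + z)"
    by (simp add: alt_trilinear_zero[OF assms])
  also have "\<dots> = \<omega> x y y + \<omega> x y z + (\<omega> x z y + \<omega> x z z)"
    by (simp only: alt_trilinear_add[OF assms] ac_simps)
  also have "\<dots> = \<omega> x y z + \<omega> x z y"
    by (simp add: alt_trilinear_zero[OF assms])
  finally show ?thesis
    by (simp add: eq_neg_iff_add_eq_0 add.commute)
qed

lemma alt_trilinear_eq_det3:
  assumes "alt_trilinear \<omega>"
  shows "\<omega> x y z = \<omega> (delta 0) (delta 1) (delta 2) * det3 x y z"
proof -
  let ?e = "delta :: 3 \<Rightarrow> 'a vec3"
  have "lin_form (\<lambda>x. \<omega> x y z)" "lin_form (\<lambda>y. \<omega> x y z)" "lin_form (\<lambda>z. \<omega> x y z)" for x y z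
    using assms by (simp_all add: alt_trilinear_def)
  note e1 = lin_form_expand_3[OF this(1)] and e2 = lin_form_expand_3[OF this(2)]
    and e3 = lin_form_expand_3[OF this(3)]
  have perm:
    "\<omega> (?e 0) (?e 2) (?e 1) = - \<omega> (?e 0) (?e 1) (?e 2)"
    "\<omega> (?e 1) (?e 0) (?e 2) = - \<omega> (?e 0) (?e 1) (?e 2)"
    "\<omega> (?e 1) (?e 2) (?e 0) = \<omega> (?e 0) (?e 1) (?e 2)"
    "\<omega> (?e 2) (?e 0) (?e 1) = \<omega> (?e 0) (?e 1) (?e 2)"
    "\<omega> (?e 2) (?e 1) (?e 0) = - \<omega> (?e 0) (?e 1) (?e 2)"
    by (metis assms alt_trilinear_swap12 alt_trilinear_swap23 minus_minus)+
  show ?thesis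
    unfolding e1[of x y z] e2[of "?e _" y z] e3[of "?e _" "?e _" z]
    by (simp add: alt_trilinear_zero[OF assms] perm det3_def algebra_simps)
qed

section \<open>The wedge products and tilde \<omega>\<close>

lemma bw2_eq_outer: "bw2 \<zeta> y z = outer (\<zeta> y) z - outer (\<zeta> z) y"
  by (simp add: bw2_def tens2_eq_outer)

lemma bw2_in_I2: "bw2 \<zeta> y z \<in> I2 \<zeta>"
  unfolding I2_def
  by (intro CollectI exI[of _ "{(y, z)}"] exI[of _ "\<lambda>_. 1"]) (simp add: scal_def)

lemma lin_form_eq_on_I2:
  assumes "lin_form f" and "lin_form g" and "\<And>y z. f (bw2 \<zeta> y z) = g (bw2 \<zeta> y z)"
    and "w \<in> I2 \<zeta>"
  shows "f w = g w"
  using \<open>w \<in> I2 \<zeta>\<close>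
  by (auto simp: I2_def lin_form_sum[OF assms(1)] lin_form_sum[OF assms(2)] assms(3))

lemma the_eq_on_span:
  assumes "\<And>S c. finite S \<Longrightarrow> L (A S c) = B S c" and "\<exists>S c. finite S \<and> w = A S c"
  shows "(THE u. \<exists>S c. finite S \<and> w = A S c \<and> u = B S c) = L w"
  using assms by (intro the_equality) auto

(* For w = \<zeta> y \<otimes> z - \<zeta> z \<otimes> y the three terms produce the six terms of
   x \<barwedge> y \<barwedge> z, so this linear map realises w \<mapsto> x \<barwedge> w on I_2. *)
definition bw_left :: "('k::field vec3 \<Rightarrow> 'k vec3) \<Rightarrow> 'k vec3 \<Rightarrow> 'k ten2 \<Rightarrow> 'k ten3" where
  "bw_left \<zeta> x w = (\<lambda>(i, j, m). \<zeta> (\<zeta> x) i * w (j, m)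
     + tensor_id \<zeta> (id_tensor \<zeta> w) (i, j) * x m - tensor_id \<zeta> w (i, m) * \<zeta> x j)"

lemma klin_bw_left:
  assumes "klin \<zeta>"
  shows "klin (bw_left \<zeta> x)"
proof -
  note lin = klin_tensor_id[OF assms] klin_id_tensor[OF assms]
  show ?thesis
    by (simp add: klin_def bw_left_def fun_eq_iff scal_apply algebra_simps
        klin_add[OF lin(1)] klin_scal[OF lin(1)] klin_add[OF lin(2)] klin_scal[OF lin(2)])
qed

lemma bw_left_bw2:
  assumes "klin \<zeta>"
  shows "bw_left \<zeta> x (bw2 \<zeta> y z) = bw3 \<zeta> x y z"
proof -
  have t1: "tensor_id \<zeta> (bw2 \<zeta> y z) = outer (\<zeta> (\<zeta> y)) z - outer (\<zeta> (\<zeta> z)) y"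
    by (simp only: bw2_eq_outer klin_diff[OF klin_tensor_id[OF assms]] tensor_id_outer[OF assms])
  have t2: "tensor_id \<zeta> (id_tensor \<zeta> (bw2 \<zeta> y z))
      = outer (\<zeta> (\<zeta> y)) (\<zeta> z) - outer (\<zeta> (\<zeta> z)) (\<zeta> y)"
    by (simp only: bw2_eq_outer klin_diff[OF klin_id_tensor[OF assms]] id_tensor_outer[OF assms]
        klin_diff[OF klin_tensor_id[OF assms]] tensor_id_outer[OF assms])
  show ?thesis
    unfolding bw_left_def t1 t2
    by (simp add: bw2_eq_outer bw3_def tens3_eq_outer fun_eq_iff outer_def algebra_simps)
qed

lemma wprod_eq_bw_left:
  assumes "klin \<zeta>" and "w \<in> I2 \<zeta>"
  shows "wprod \<zeta> x w = bw_left \<zeta> x w"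
  unfolding wprod_def
  using assms by (intro the_eq_on_span) (simp_all add: klin_sum[OF klin_bw_left] bw_left_bw2 I2_def)

definition Upsilon3 :: "('k::field vec3 \<Rightarrow> 'k vec3) \<Rightarrow> 'k ten3 set" where
  "Upsilon3 \<zeta> = {u. \<exists>S c. finite S
     \<and> u = (\<Sum>p\<in>S. scal (c p) (bw3 \<zeta> (fst p) (fst (snd p)) (snd (snd p))))}"

lemma bw_left_in_Upsilon3:
  assumes "klin \<zeta>" and "w \<in> I2 \<zeta>"
  shows "bw_left \<zeta> x w \<in> Upsilon3 \<zeta>"
proof -
  obtain S c where "finite S" and w: "w = (\<Sum>p\<in>S. scal (c p) (bw2 \<zeta> (fst p) (snd p)))"
    using \<open>w \<in> I2 \<zeta>\<close> by (auto simp: I2_def)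
  have "bw_left \<zeta> x w = (\<Sum>p\<in>S. scal (c p) (bw3 \<zeta> x (fst p) (snd p)))"
    by (simp add: w klin_sum[OF klin_bw_left[OF assms(1)]] bw_left_bw2 assms)
  also have "\<dots> = (\<Sum>p\<in>Pair x ` S.
      scal (c (snd p)) (bw3 \<zeta> (fst p) (fst (snd p)) (snd (snd p))))"
    by (subst sum.reindex) (auto simp: inj_on_def)
  finally show ?thesis
    unfolding Upsilon3_def using \<open>finite S\<close>
    by (intro CollectI exI[of _ "Pair x ` S"] exI[of _ "\<lambda>p. c (snd p)"]) simp
qed

(* Undoing the twists \<zeta>^2, \<zeta>, id of the three factors turns x \<barwedge> y \<barwedge> z into the
   antisymmetrisation of x \<otimes> y \<otimes> z, whose (0, 1, 2) entry is det(x, y, z). *)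
definition untwist :: "('k::field vec3 \<Rightarrow> 'k vec3) \<Rightarrow> 'k ten3 \<Rightarrow> 'k ten3" where
  "untwist \<zeta> u = tensor_id (inv \<zeta>) (tensor_id (inv \<zeta>) (id_tensor (tensor_id (inv \<zeta>)) u))"

definition bw3_coord :: "('k::field vec3 \<Rightarrow> 'k vec3) \<Rightarrow> 'k ten3 \<Rightarrow> 'k" where
  "bw3_coord \<zeta> u = untwist \<zeta> u (0, 1, 2)"

lemma klin_untwist:
  assumes "klin \<zeta>" and "bij \<zeta>"
  shows "klin (untwist \<zeta>)"
proof -
  have t1: "klin (tensor_id (inv \<zeta>))" and t2: "klin (id_tensor (tensor_id (inv \<zeta>)))"
    using klin_inv[OF assms] by (simp_all add: klin_tensor_id klin_id_tensor)
  show ?thesis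
    unfolding untwist_def[abs_def] by (rule klin_comp[OF t1 klin_comp[OF t1 t2]])
qed

lemma untwist_tens3:
  assumes "klin \<zeta>" and "bij \<zeta>"
  shows "untwist \<zeta> (tens3 (\<zeta> (\<zeta> x)) (\<zeta> y) z) = tens3 x y z"
proof -
  have "klin (inv \<zeta>)" and "\<And>v. inv \<zeta> (\<zeta> v) = v"
    using klin_inv[OF assms] \<open>bij \<zeta>\<close> by (simp_all add: bij_is_inj)
  then show ?thesis
    by (simp add: untwist_def tens3_eq_outer tensor_id_outer id_tensor_outer klin_tensor_id)
qed

lemma lin_form_bw3_coord:
  assumes "klin \<zeta>" and "bij \<zeta>"
  shows "lin_form (bw3_coord \<zeta>)"
  using lin_form_apply[OF klin_untwist[OF assms]] unfolding bw3_coord_def[abs_def] .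

lemma bw3_coord_bw3:
  assumes "klin \<zeta>" and "bij \<zeta>"
  shows "bw3_coord \<zeta> (bw3 \<zeta> x y z) = det3 x y z"
proof -
  have "untwist \<zeta> (bw3 \<zeta> x y z)
      = tens3 x y z + tens3 y z x + tens3 z x y - tens3 x z y - tens3 y x z - tens3 z y x"
    by (simp only: bw3_def klin_add[OF klin_untwist[OF assms]] klin_diff[OF klin_untwist[OF assms]]
        untwist_tens3[OF assms])
  then show ?thesis
    by (simp add: bw3_coord_def tens3_def det3_def)
qed

lemma omega_tilde_eq:
  assumes "klin \<zeta>" and "bij \<zeta>" and "alt_trilinear \<omega>" and "u \<in> Upsilon3 \<zeta>"
  shows "omega_tilde \<zeta> \<omega> u = \<omega> (delta 0) (delta 1) (delta 2) * bw3_coord \<zeta> u"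
  unfolding omega_tilde_def
proof (rule the_eq_on_span)
  show "\<exists>S c. finite S \<and> u = (\<Sum>p\<in>S. scal (c p) (bw3 \<zeta> (fst p) (fst (snd p)) (snd (snd p))))"
    using \<open>u \<in> Upsilon3 \<zeta>\<close> by (simp add: Upsilon3_def)
  show "\<omega> (delta 0) (delta 1) (delta 2)
      * bw3_coord \<zeta> (\<Sum>p\<in>S. scal (c p) (bw3 \<zeta> (fst p) (fst (snd p)) (snd (snd p))))
      = (\<Sum>p\<in>S. c p * \<omega> (fst p) (fst (snd p)) (snd (snd p)))" for S c
    by (simp add: lin_form_sum[OF lin_form_bw3_coord[OF assms(1,2)]] bw3_coord_bw3[OF assms(1,2)]
        alt_trilinear_eq_det3[OF assms(3), of "fst _"] sum_distrib_left mult_ac)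
qed

section \<open>The pairing of V with I_2\<close>

definition wedge_coeff :: "('k::field vec3 \<Rightarrow> 'k vec3) \<Rightarrow> 'k vec3 \<Rightarrow> 'k ten2 \<Rightarrow> 'k" where
  "wedge_coeff \<zeta> x w = bw3_coord \<zeta> (bw_left \<zeta> x w)"

lemma lin_form_wedge_coeff:
  assumes "klin \<zeta>" and "bij \<zeta>"
  shows "lin_form (wedge_coeff \<zeta> x)"
  unfolding wedge_coeff_def[abs_def]
  by (rule lin_form_comp[OF klin_bw_left[OF assms(1)] lin_form_bw3_coord[OF assms]])

lemma wedge_coeff_bw2:
  assumes "klin \<zeta>" and "bij \<zeta>"
  shows "wedge_coeff \<zeta> x (bw2 \<zeta> y z) = det3 x y z"
  by (simp add: wedge_coeff_def bw_left_bw2 bw3_coord_bw3 assms)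

lemma tensor_id_inv_bw2:
  assumes "klin \<zeta>" and "bij \<zeta>"
  shows "tensor_id (inv \<zeta>) (bw2 \<zeta> y z) = tens2 y z - tens2 z y"
proof -
  have inv: "klin (inv \<zeta>)" and inv_f: "\<And>v. inv \<zeta> (\<zeta> v) = v"
    using klin_inv[OF assms] \<open>bij \<zeta>\<close> by (simp_all add: bij_is_inj)
  show ?thesis
    by (simp only: bw2_eq_outer klin_diff[OF klin_tensor_id[OF inv]] tensor_id_outer[OF inv] inv_f
        tens2_eq_outer)
qed

(* Untwisted by \<zeta>, an element of I_2 is an alternating matrix, and pairing it with the
   basis vectors reads off its three independent entries.  The zero diagonal is stated
   separately: it does not follow from antisymmetry in characteristic 2. *)
lemma I2_coordinates:
  assumes "klin \<zeta>" and "bij \<zeta>" and "w \<in> I2 \<zeta>"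
  defines "v \<equiv> tensor_id (inv \<zeta>) w"
  shows "wedge_coeff \<zeta> (delta 0) w = v (1, 2)"
    and "wedge_coeff \<zeta> (delta 1) w = v (2, 0)"
    and "wedge_coeff \<zeta> (delta 2) w = v (0, 1)"
    and "v (i, i) = 0"
    and "v (j, i) = - v (i, j)"
proof -
  have lin_v: "lin_form (\<lambda>w. tensor_id (inv \<zeta>) w p)" for p
    by (rule lin_form_apply[OF klin_tensor_id[OF klin_inv[OF assms(1,2)]]])
  have lin_neg_v: "lin_form (\<lambda>w. - tensor_id (inv \<zeta>) w p)" for p
    using lin_v[of p] by (simp add: lin_form_def)
  have lin_0: "lin_form (\<lambda>w :: 'a ten2. 0 :: 'a)"
    by (simp add: lin_form_def)
  note on_I2 = lin_form_eq_on_I2[OF _ _ _ \<open>w \<in> I2 \<zeta>\<close>]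
  note simps = wedge_coeff_bw2[OF assms(1,2)] tensor_id_inv_bw2[OF assms(1,2)] det3_delta
    tens2_def mult.commute
  show "wedge_coeff \<zeta> (delta 0) w = v (1, 2)" "wedge_coeff \<zeta> (delta 1) w = v (2, 0)"
    "wedge_coeff \<zeta> (delta 2) w = v (0, 1)"
    unfolding v_def by (rule on_I2[OF lin_form_wedge_coeff[OF assms(1,2)] lin_v]; simp add: simps)+
  show "v (i, i) = 0"
    unfolding v_def by (rule on_I2[OF lin_v lin_0]) (simp add: simps)
  show "v (j, i) = - v (i, j)"
    unfolding v_def by (rule on_I2[OF lin_v lin_neg_v]) (simp add: simps)
qed

lemma I2_eq_0_if_wedge_coeff_eq_0:
  assumes "klin \<zeta>" and "bij \<zeta>" and "w \<in> I2 \<zeta>"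
    and "\<And>a. wedge_coeff \<zeta> (delta a) w = 0"
  shows "w = 0"
proof -
  let ?v = "tensor_id (inv \<zeta>) w"
  note coord = I2_coordinates[OF assms(1-3)]
  have "?v (i, j) = 0" for i j
    using exhaust_3[of i] exhaust_3[of j] coord(4)[of i]
      coord(5)[of 2 1] coord(5)[of 0 2] coord(5)[of 1 0] coord(1-3) assms(4)
    by auto
  then have "?v = 0"
    by (simp add: fun_eq_iff split_paired_All)
  have "w = tensor_id \<zeta> ?v"
    using \<open>bij \<zeta>\<close> by (simp add: tensor_id_tensor_id bij_is_surj surj_f_inv_f tensor_id_ident)
  also have "\<dots> = 0"
    using \<open>?v = 0\<close> klin_zero[OF klin_tensor_id[OF \<open>klin \<zeta>\<close>]] by simp
  finally show ?thesis .
qed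

section \<open>The forms \<ell>_xy\<close>

locale ell_setting =
  fixes \<zeta> :: "'k::field vec3 \<Rightarrow> 'k vec3"
    and q :: 'k
    and R :: "'k ten2 \<Rightarrow> 'k ten2"
    and \<omega> :: "'k vec3 \<Rightarrow> 'k vec3 \<Rightarrow> 'k vec3 \<Rightarrow> 'k"
  assumes zeta_klin: "klin \<zeta>" and zeta_bij: "bij \<zeta>"
    and q_nz: "q \<noteq> 0"
    and R_hecke: "hecke q R"
    and R_image: "range (\<lambda>T. R T - scal q T) = I2 \<zeta>"
    and omega_alt: "alt_trilinear \<omega>"
    and omega_nz: "\<omega> \<noteq> (\<lambda>x y z. 0)"
begin

lemma R_klin: "klin R"
  using hecke_klin[OF R_hecke] .

lemma zeta_inv: "\<zeta> (inv \<zeta> v) = v"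
  using zeta_bij by (simp add: bij_is_surj surj_f_inv_f)

lemma Ymap_in_I2: "Ymap q R T \<in> I2 \<zeta>"
proof -
  have "R (- T) - scal q (- T) \<in> I2 \<zeta>"
    unfolding R_image[symmetric] by (rule rangeI)
  then show ?thesis
    by (simp add: Ymap_uminus[OF R_klin, of q "- T", symmetric])
qed

lemma I2_in_range_Ymap:
  assumes "w \<in> I2 \<zeta>"
  obtains T where "w = Ymap q R T"
proof -
  obtain T where "w = R T - scal q T"
    using assms unfolding R_image[symmetric] by blast
  then show ?thesis
    using that Ymap_uminus[OF R_klin, of q T] by metis
qed

lemma R_ne_scal:
  obtains X where "R X \<noteq> scal q X"
proof (rule ccontr)
  assume "\<not> thesis"
  with that have eigen: "R X = scal q X" for X by blast
  obtain T where "bw2 \<zeta> (delta 0) (delta 1) = Ymap q R T"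
    using I2_in_range_Ymap[OF bw2_in_I2] .
  then have "bw2 \<zeta> (delta 0) (delta 1) = 0"
    using eigen Ymap_eq_0_iff by metis
  then have "(tens2 (delta 0) (delta 1) - tens2 (delta 1) (delta 0) :: 'k ten2) = 0"
    using tensor_id_inv_bw2[OF zeta_klin zeta_bij]
      klin_zero[OF klin_tensor_id[OF klin_inv[OF zeta_klin zeta_bij]]]
    by metis
  then have "(tens2 (delta 0) (delta 1) - tens2 (delta 1) (delta 0)) (0, 1) = (0 :: 'k)"
    by simp
  then show False
    by (simp add: tens2_def delta_def)
qed

lemma omega_basis_ne_0: "\<omega> (delta 0) (delta 1) (delta 2) \<noteq> 0"
  using omega_nz alt_trilinear_eq_det3[OF omega_alt] by fastforce

lemma ell_eq:
  "ell \<zeta> q R \<omega> x y z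
     = \<omega> (delta 0) (delta 1) (delta 2) * wedge_coeff \<zeta> x (Ymap q R (tens2 (\<zeta> y) z))"
  unfolding ell_def wedge_coeff_def
  by (simp add: wprod_eq_bw_left[OF zeta_klin Ymap_in_I2]
      omega_tilde_eq[OF zeta_klin zeta_bij omega_alt bw_left_in_Upsilon3[OF zeta_klin Ymap_in_I2]])

lemma lin_form_wedge_coeff_Ymap: "lin_form (\<lambda>T. wedge_coeff \<zeta> x (Ymap q R T))"
  by (rule lin_form_comp[OF klin_Ymap[OF R_klin] lin_form_wedge_coeff[OF zeta_klin zeta_bij]])

lemma lin_form_ell: "lin_form (ell \<zeta> q R \<omega> x y)"
proof -
  have "lin_form (\<lambda>z. wedge_coeff \<zeta> x (Ymap q R (tens2 (\<zeta> y) z)))"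
    by (rule lin_form_comp[OF klin_tens2_right lin_form_wedge_coeff_Ymap])
  then show ?thesis
    by (simp add: lin_form_def ell_eq[abs_def] algebra_simps)
qed

lemma eigen_if_wedge_coeff_Ymap_eq_0:
  assumes "\<And>a. wedge_coeff \<zeta> (delta a) (Ymap q R T) = 0"
  shows "R T = scal q T"
  using I2_eq_0_if_wedge_coeff_eq_0[OF zeta_klin zeta_bij Ymap_in_I2 assms] Ymap_eq_0_iff by blast

lemma ell_separating:
  assumes "\<And>a b. ell \<zeta> q R \<omega> (delta a) (inv \<zeta> (delta b)) z = 0"
  shows "z = 0"
proof -
  have on_basis: "wedge_coeff \<zeta> (delta a) (Ymap q R (tens2 (delta b) z)) = 0" for a b
    using assms[of a b] omega_basis_ne_0 by (simp add: ell_eq zeta_inv)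
  have "R (tens2 v z) = scal q (tens2 v z)" for v
  proof (rule eigen_if_wedge_coeff_Ymap_eq_0)
    fix a
    have "lin_form (\<lambda>v. wedge_coeff \<zeta> (delta a) (Ymap q R (tens2 v z)))"
      by (rule lin_form_comp[OF klin_tens2_left lin_form_wedge_coeff_Ymap])
    from lin_form_eq_sum[OF this, of v] on_basis
    show "wedge_coeff \<zeta> (delta a) (Ymap q R (tens2 v z)) = 0"
      by simp
  qed
  moreover obtain X where "R X \<noteq> scal q X"
    by (rule R_ne_scal)
  ultimately show "z = 0"
    using hecke_right_eigen_eq_0[OF R_hecke q_nz] by blast
qed

lemma ell_span:
  assumes "lin_form \<phi>"
  shows "\<exists>S c. finite S \<and> \<phi> = (\<lambda>z. \<Sum>p\<in>S. c p * ell \<zeta> q R \<omega> (fst p) (snd p) z)"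
proof -
  let ?S = "(\<lambda>(a, b). (delta a, inv \<zeta> (delta b))) ` (UNIV :: (3 \<times> 3) set)"
  have separating: "z = 0" if "\<And>p. p \<in> ?S \<Longrightarrow> ell \<zeta> q R \<omega> (fst p) (snd p) z = 0" for z
  proof (rule ell_separating)
    fix a b
    have "(delta a, inv \<zeta> (delta b)) \<in> ?S"
      by (rule image_eqI[of _ _ "(a, b)"]) simp_all
    from that[OF this] show "ell \<zeta> q R \<omega> (delta a) (inv \<zeta> (delta b)) z = 0"
      by simp
  qed
  have "finite ?S"
    by simp
  from lin_form_in_span[OF this lin_form_ell separating assms]
  obtain c where "\<phi> = (\<lambda>z. \<Sum>p\<in>?S. c p * ell \<zeta> q R \<omega> (fst p) (snd p) z)" ..
  then show ?thesis
    by (intro exI[of _ ?S] exI[of _ c]) simp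
qed

lemma ell_left_kernel:
  assumes "\<forall>x. ell \<zeta> q R \<omega> a x = (\<lambda>z. 0)"
  shows "a = 0"
proof (rule eq_0_if_det3_eq_0)
  have "wedge_coeff \<zeta> a (Ymap q R (tens2 u z)) = 0" for u z
    using fun_cong[OF spec[OF assms, of "inv \<zeta> u"], where x=z] omega_basis_ne_0
    by (simp add: ell_eq zeta_inv)
  then have vanish: "wedge_coeff \<zeta> a (Ymap q R T) = 0" for T
    using lin_form_eq_sum[OF lin_form_wedge_coeff_Ymap[of a], of T]
    by (simp add: delta_pair tens2_eq_outer)
  fix y z
  obtain T where "bw2 \<zeta> y z = Ymap q R T"
    using I2_in_range_Ymap[OF bw2_in_I2] .
  then show "det3 a y z = 0"
    using wedge_coeff_bw2[OF zeta_klin zeta_bij, of a y z] vanish by simp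
qed

lemma ell_right_kernel:
  assumes "\<forall>x. ell \<zeta> q R \<omega> x a = (\<lambda>z. 0)"
  shows "a = 0"
proof -
  have "R (tens2 (\<zeta> a) z) = scal q (tens2 (\<zeta> a) z)" for z
    using fun_cong[OF spec[OF assms, of "delta _"], where x=z] omega_basis_ne_0
    by (intro eigen_if_wedge_coeff_Ymap_eq_0) (simp add: ell_eq)
  moreover obtain X where "R X \<noteq> scal q X"
    by (rule R_ne_scal)
  ultimately have "\<zeta> a = 0"
    using hecke_left_eigen_eq_0[OF R_hecke q_nz] by blast
  then show "a = 0"
    using zeta_bij klin_zero[OF zeta_klin] by (metis bij_is_inj injD)
qed

end

theorem lemma2p4:
  fixes \<zeta> :: "'k::field vec3 \<Rightarrow> 'k vec3"
    and q :: 'k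
    and R :: "'k ten2 \<Rightarrow> 'k ten2"
    and \<omega> :: "'k vec3 \<Rightarrow> 'k vec3 \<Rightarrow> 'k vec3 \<Rightarrow> 'k"
  assumes zeta_GL: "klin \<zeta>" "bij \<zeta>"
    and q_nz: "q \<noteq> 0"
    and R_hecke: "hecke q R"
    and R_image: "range (\<lambda>T. R T - scal q T) = I2 \<zeta>"
    and omega_alt: "alt_trilinear \<omega>"
    and omega_nz: "\<omega> \<noteq> (\<lambda>x y z. 0)"
  shows "(\<forall>\<phi> :: 'k vec3 \<Rightarrow> 'k. lin_form \<phi> \<longrightarrow>
            (\<exists>S c. finite S \<and> \<phi> = (\<lambda>z. \<Sum>p\<in>S. c p * ell \<zeta> q R \<omega> (fst p) (snd p) z)))
       \<and> (\<forall>a. ((\<forall>x. ell \<zeta> q R \<omega> a x = (\<lambda>z. 0)) \<or> (\<forall>x. ell \<zeta> q R \<omega> x a = (\<lambda>z. 0))) \<longrightarrow> a = 0)"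
proof -
  interpret ell_setting \<zeta> q R \<omega>
    using assms by unfold_locales
  show ?thesis
    using ell_span ell_left_kernel ell_right_kernel by blast
qed

end
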